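(* Let $\mathcal{C}_1$ be an $[n,k_1,d_1]_2$ binary linear code that is even-like, let $\mathcal{C}_2$ be the $[n,1,n]_2$ repetition code generated by the all-ones vector $\mathbf{1}_n$, and let $\mathcal{C}=\{(\mathbf{u},\mathbf{u}+\mathbf{v}):\ \mathbf{u}\in\mathcal{C}_1,\ \mathbf{v}\in\mathcal{C}_2\}$. Then $\mathcal{C}$ is a $[2n,k_1+1,\min\{2d_1,n\}]_2$ code with $\dim(\mathrm{Hull}_E(\mathcal{C}))=k_1$ if $n$ is odd and $\dim(\mathrm{Hull}_E(\mathcal{C}))=k_1+1$ if $n$ is even.
   Context: A vector $\mathbf{x}\in\mathbb{F}_2^n$ is even-like if $\sum_i x_i=0$ and odd-like otherwise; a binary code is even-like if all its codewords are even-like, and odd-like otherwise. $\mathrm{Hull}_E(\mathcal{C})=\mathcal{C}\cap\mathcal{C}^{\perp_E}$ where $\mathcal{C}^{\perp_E}$ is the dual with respect to $(\mathbf{x},\mathbf{y})_E=\sum_ix_iy_i$. An $[n,k,d]_2$ code is a $k$-dimensional subspace of $\mathbb{F}_2^n$ with minimum distance $d$. *)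

theory Defs
  imports "HOL-Analysis.Analysis" "HOL-Library.Z2"
begin

text \<open>Binary vectors of length n are elements of bit^'n with CARD('n) = n.
  A binary linear code is a linear subspace (over the field bit = F_2).\<close>

definition bin_linear_code :: "(bit ^ 'n) set \<Rightarrow> bool" where
  "bin_linear_code C \<longleftrightarrow> vec.subspace C"

definition hweight :: "bit ^ 'n \<Rightarrow> nat" where
  "hweight x = card {i. x $ i \<noteq> 0}"

definition min_dist :: "(bit ^ 'n) set \<Rightarrow> nat" where
  "min_dist C = Min (hweight ` (C - {0}))"

definition even_like_vec :: "bit ^ 'n \<Rightarrow> bool" where
  "even_like_vec x \<longleftrightarrow> (\<Sum>i\<in>UNIV. x $ i) = 0"

definition even_like_code :: "(bit ^ 'n) set \<Rightarrow> bool" where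
  "even_like_code C \<longleftrightarrow> (\<forall>x\<in>C. even_like_vec x)"

definition euclid_ip :: "bit ^ 'n \<Rightarrow> bit ^ 'n \<Rightarrow> bit" where
  "euclid_ip x y = (\<Sum>i\<in>UNIV. x $ i * y $ i)"

definition euclid_dual :: "(bit ^ 'n) set \<Rightarrow> (bit ^ 'n) set" where
  "euclid_dual C = {y. \<forall>x\<in>C. euclid_ip x y = 0}"

definition hull_E :: "(bit ^ 'n) set \<Rightarrow> (bit ^ 'n) set" where
  "hull_E C = C \<inter> euclid_dual C"

definition all_ones :: "bit ^ 'n" where
  "all_ones = (\<chi> i. 1)"

definition concat_vec :: "bit ^ 'n \<Rightarrow> bit ^ 'n \<Rightarrow> bit ^ ('n + 'n)" where
  "concat_vec u w = (\<chi> i. case i of Inl j \<Rightarrow> u $ j | Inr j \<Rightarrow> w $ j)"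

definition u_uv :: "(bit ^ 'n) set \<Rightarrow> (bit ^ 'n) set \<Rightarrow> (bit ^ ('n + 'n)) set" where
  "u_uv C1 C2 = {concat_vec u (u + v) | u v. u \<in> C1 \<and> v \<in> C2}"

end

theory Submission
  imports Defs
begin

text \<open>Write \<open>C\<close> for the code and \<open>\<one>\<close> for the all-ones vector.
  \<open>C\<close> is the direct sum of the diagonal copy \<open>{(u, u) | u \<in> C\<^sub>1}\<close> of \<open>C\<^sub>1\<close> and of \<open>{(0, v) | v \<in> C\<^sub>2}\<close>,
  so \<open>dim C = k\<^sub>1 + 1\<close>. Plotkin's argument gives the minimum distance: a codeword \<open>(u, u)\<close> has
  weight \<open>2 wt u\<close>, and a codeword \<open>(u, u + v)\<close> with \<open>v \<noteq> 0\<close> has weight at least \<open>wt v\<close>.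
  Over \<open>F\<^sub>2\<close> the terms \<open>2 (u, u')\<close> vanish, and even-like vectors are orthogonal to \<open>\<one>\<close>, so
  the inner product of \<open>(u, u + s \<one>)\<close> and \<open>(u', u' + t \<one>)\<close> is \<open>s t n\<close>. Hence \<open>C\<close> is
  self-orthogonal for even \<open>n\<close>, while for odd \<open>n\<close> its hull is the diagonal copy of \<open>C\<^sub>1\<close>.\<close>

(* The default simp rules turn + and * on bit into xor and and, which defeats ring reasoning. *)
declare add_bit_eq_xor [simp del] mult_bit_eq_and [simp del]

lemma bit_add_self [simp]: "(x::bit) + x = 0"
  by (cases x) simp_all

lemma of_nat_bit: "(of_nat n :: bit) = (if even n then 0 else 1)"
  by (induction n) (auto simp: add_bit_eq_xor)

lemma UNIV_bit: "(UNIV::bit set) = {0, 1}"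
  using bit_not_zero_iff by blast

instance bit :: finite
  by standard (simp add: UNIV_bit)

lemma span_all_ones: "vec.span {all_ones :: bit ^ 'n} = {0, all_ones}"
  unfolding vec.span_singleton UNIV_bit by simp

lemma all_ones_neq_0 [simp]: "all_ones \<noteq> (0 :: bit ^ 'n)"
  by (simp add: all_ones_def vec_eq_iff)

lemma dim_span_all_ones: "vec.dim (vec.span {all_ones :: bit ^ 'n}) = 1"
  by (simp add: vec.dim_insert)

lemma concat_vec_add: "concat_vec a b + concat_vec c d = concat_vec (a + c) (b + d)"
  by (simp add: concat_vec_def vec_eq_iff split: sum.split)

lemma concat_vec_scale: "k *s concat_vec a b = concat_vec (k *s a) (k *s b)"
  by (simp add: concat_vec_def vec_eq_iff split: sum.split)

lemma concat_vec_eq_iff: "concat_vec a b = concat_vec c d \<longleftrightarrow> a = c \<and> b = d"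
  by (auto simp: concat_vec_def vec_eq_iff split: sum.split)

lemma concat_vec_eq_0_iff [simp]: "concat_vec a b = 0 \<longleftrightarrow> a = 0 \<and> b = 0"
  by (auto simp: concat_vec_def vec_eq_iff split: sum.split)

lemma linear_concat_vec_diag: "Vector_Spaces.linear (*s) (*s) (\<lambda>u. concat_vec u u)"
  by unfold_locales (simp_all add: concat_vec_add concat_vec_scale)

lemma linear_concat_vec_0: "Vector_Spaces.linear (*s) (*s) (concat_vec 0)"
  by unfold_locales (simp_all add: concat_vec_add concat_vec_scale)

lemma u_uvI: "u \<in> C1 \<Longrightarrow> v \<in> C2 \<Longrightarrow> concat_vec u (u + v) \<in> u_uv C1 C2"
  unfolding u_uv_def by blast

lemma u_uv_eq_sums:
  "u_uv C1 C2 = {x + y |x y. x \<in> (\<lambda>u. concat_vec u u) ` C1 \<and> y \<in> concat_vec 0 ` C2}"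
proof (intro set_eqI iffI)
  fix x assume "x \<in> u_uv C1 C2"
  then obtain u v where "x = concat_vec u (u + v)" "u \<in> C1" "v \<in> C2"
    unfolding u_uv_def by blast
  then show "x \<in> {x + y |x y. x \<in> (\<lambda>u. concat_vec u u) ` C1 \<and> y \<in> concat_vec 0 ` C2}"
    by (intro CollectI exI[of _ "concat_vec u u"] exI[of _ "concat_vec 0 v"]) (simp add: concat_vec_add)
next
  fix x assume "x \<in> {x + y |x y. x \<in> (\<lambda>u. concat_vec u u) ` C1 \<and> y \<in> concat_vec 0 ` C2}"
  then obtain u v where "x = concat_vec u u + concat_vec 0 v" "u \<in> C1" "v \<in> C2"
    by blast
  then show "x \<in> u_uv C1 C2"
    using u_uvI[of u C1 v C2] by (simp add: concat_vec_add)
qed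

lemma subspace_u_uv:
  assumes "vec.subspace C1" "vec.subspace C2"
  shows "vec.subspace (u_uv C1 C2)"
  unfolding u_uv_eq_sums
  using assms linear_concat_vec_diag linear_concat_vec_0
  by (intro vec.subspace_sums vec.linear_subspace_image)

lemma dim_u_uv:
  assumes "vec.subspace C1" "vec.subspace C2"
  shows "vec.dim (u_uv C1 C2) = vec.dim C1 + vec.dim C2"
proof -
  let ?D = "(\<lambda>u. concat_vec u u) ` C1" and ?Z = "concat_vec 0 ` C2"
  have "vec.subspace ?D" "vec.subspace ?Z"
    using assms linear_concat_vec_diag linear_concat_vec_0 by (auto intro: vec.linear_subspace_image)
  then have "vec.dim (u_uv C1 C2) + vec.dim (?D \<inter> ?Z) = vec.dim ?D + vec.dim ?Z"
    unfolding u_uv_eq_sums by (rule vec.dim_sums_Int)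
  moreover have "vec.dim ?D = vec.dim C1"
    using linear_concat_vec_diag by (rule vec.dim_image_eq) (simp add: inj_on_def concat_vec_eq_iff)
  moreover have "vec.dim ?Z = vec.dim C2"
    using linear_concat_vec_0 by (rule vec.dim_image_eq) (simp add: inj_on_def concat_vec_eq_iff)
  moreover have "?D \<inter> ?Z \<subseteq> {0}"
    by (auto simp: concat_vec_eq_iff)
  then have "vec.dim (?D \<inter> ?Z) = 0"
    by (rule vec.dim_eq_0[THEN iffD2])
  ultimately show ?thesis
    by linarith
qed

lemma u_uv_span_singleton:
  "u_uv C1 (vec.span {w}) = {concat_vec u (u + s *s w) |u s. u \<in> C1}"
  by (auto simp: u_uv_def vec.span_singleton)

lemma hweight_eq_0_iff [simp]: "hweight x = 0 \<longleftrightarrow> x = (0 :: bit ^ 'n)"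
  unfolding hweight_def by (auto simp: vec_eq_iff)

lemma hweight_concat_vec: "hweight (concat_vec a b) = hweight a + hweight b"
proof -
  have "{i. concat_vec a b $ i \<noteq> 0} = {j. a $ j \<noteq> 0} <+> {j. b $ j \<noteq> 0}"
  proof (rule set_eqI)
    show "i \<in> {i. concat_vec a b $ i \<noteq> 0} \<longleftrightarrow> i \<in> {j. a $ j \<noteq> 0} <+> {j. b $ j \<noteq> 0}" for i
      by (cases i) (auto simp: concat_vec_def)
  qed
  then show ?thesis
    unfolding hweight_def by (simp add: card_Plus)
qed

lemma hweight_le_add: "hweight v \<le> hweight u + hweight (u + v)"
proof -
  have "{i. v $ i \<noteq> 0} \<subseteq> {i. u $ i \<noteq> 0} \<union> {i. (u + v) $ i \<noteq> 0}"
    by (auto simp del: bit_not_zero_iff)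
  then show ?thesis
    unfolding hweight_def by (meson card_Un_le card_mono finite le_trans)
qed

lemma hweight_all_ones: "hweight (all_ones :: bit ^ 'n) = CARD('n)"
  by (simp add: hweight_def all_ones_def)

lemma min_dist_le: "x \<in> C \<Longrightarrow> x \<noteq> 0 \<Longrightarrow> min_dist C \<le> hweight x"
  unfolding min_dist_def by simp

lemma min_dist_attained:
  assumes "x \<in> C" "x \<noteq> 0"
  obtains y where "y \<in> C" "y \<noteq> 0" "hweight y = min_dist C"
proof -
  have "min_dist C \<in> hweight ` (C - {0})"
    unfolding min_dist_def using assms by (intro Min_in) auto
  then obtain y where "y \<in> C - {0}" "min_dist C = hweight y"
    by (rule imageE)
  then show ?thesis
    using that[of y] by simp
qed

lemma min_dist_eqI:
  assumes "\<And>y. y \<in> C \<Longrightarrow> y \<noteq> 0 \<Longrightarrow> m \<le> hweight y"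
    and "x \<in> C" "x \<noteq> 0" "hweight x = m"
  shows "min_dist C = m"
  using assms min_dist_le[of x C] min_dist_attained[of x C] by (metis le_antisym)

lemma min_dist_u_uv:
  assumes "vec.subspace C1" "vec.subspace C2" "C1 \<noteq> {0}" "C2 \<noteq> {0}"
  shows "min_dist (u_uv C1 C2) = min (2 * min_dist C1) (min_dist C2)"
proof -
  have "0 \<in> C1" "0 \<in> C2"
    using assms(1,2) by (simp_all add: vec.subspace_0)
  obtain u0 v0 where "u0 \<in> C1" "u0 \<noteq> 0" "v0 \<in> C2" "v0 \<noteq> 0"
    using assms(3,4) \<open>0 \<in> C1\<close> \<open>0 \<in> C2\<close> by blast
  obtain u1 where u1: "u1 \<in> C1" "u1 \<noteq> 0" "hweight u1 = min_dist C1"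
    using \<open>u0 \<in> C1\<close> \<open>u0 \<noteq> 0\<close> by (rule min_dist_attained)
  obtain v2 where v2: "v2 \<in> C2" "v2 \<noteq> 0" "hweight v2 = min_dist C2"
    using \<open>v0 \<in> C2\<close> \<open>v0 \<noteq> 0\<close> by (rule min_dist_attained)
  have lower: "min (2 * min_dist C1) (min_dist C2) \<le> hweight x"
    if "x \<in> u_uv C1 C2" "x \<noteq> 0" for x
  proof -
    obtain u v where x: "x = concat_vec u (u + v)" "u \<in> C1" "v \<in> C2"
      using \<open>x \<in> u_uv C1 C2\<close> unfolding u_uv_def by blast
    show ?thesis
    proof (cases "v = 0")
      case True
      then have "min_dist C1 \<le> hweight u"
        using x \<open>x \<noteq> 0\<close> by (intro min_dist_le) auto
      then show ?thesis
        using True x by (simp add: hweight_concat_vec)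
    next
      case False
      then have "min_dist C2 \<le> hweight v"
        using x by (intro min_dist_le)
      then show ?thesis
        using x hweight_le_add[of v u] by (simp add: hweight_concat_vec)
    qed
  qed
  have witness: "concat_vec u1 u1 \<in> u_uv C1 C2" "concat_vec 0 v2 \<in> u_uv C1 C2"
    using u_uvI[OF u1(1) \<open>0 \<in> C2\<close>] u_uvI[OF \<open>0 \<in> C1\<close> v2(1)] by simp_all
  show ?thesis
  proof (cases "2 * min_dist C1 \<le> min_dist C2")
    case True
    show ?thesis
      by (rule min_dist_eqI[OF lower witness(1)]) (use True u1 in \<open>simp_all add: hweight_concat_vec\<close>)
  next
    case False
    show ?thesis
      by (rule min_dist_eqI[OF lower witness(2)]) (use False v2 in \<open>simp_all add: hweight_concat_vec\<close>)
  qed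
qed

lemma min_dist_span_all_ones: "min_dist (vec.span {all_ones :: bit ^ 'n}) = CARD('n)"
  by (simp add: min_dist_def span_all_ones hweight_all_ones)

lemma euclid_ip_commute: "euclid_ip x y = euclid_ip y x"
  unfolding euclid_ip_def by (simp add: mult.commute)

lemma euclid_ip_add_left: "euclid_ip (x + y) z = euclid_ip x z + euclid_ip y z"
  unfolding euclid_ip_def by (simp add: sum.distrib distrib_right)

lemma euclid_ip_add_right: "euclid_ip x (y + z) = euclid_ip x y + euclid_ip x z"
  using euclid_ip_add_left euclid_ip_commute by metis

lemma euclid_ip_scale_left: "euclid_ip (k *s x) y = k * euclid_ip x y"
  unfolding euclid_ip_def by (simp add: sum_distrib_left mult.assoc)

lemma euclid_ip_scale_right: "euclid_ip x (k *s y) = k * euclid_ip x y"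
  using euclid_ip_scale_left euclid_ip_commute by metis

lemma euclid_ip_concat_vec:
  "euclid_ip (concat_vec a b) (concat_vec c d) = euclid_ip a c + euclid_ip b d"
  unfolding euclid_ip_def
  by (simp add: concat_vec_def sum.Plus UNIV_Plus_UNIV[symmetric] del: UNIV_Plus_UNIV)

lemma euclid_ip_all_ones: "even_like_vec u \<Longrightarrow> euclid_ip u all_ones = 0"
  by (simp add: euclid_ip_def even_like_vec_def all_ones_def)

lemma euclid_ip_all_ones_self: "euclid_ip (all_ones :: bit ^ 'n) all_ones = of_nat CARD('n)"
  by (simp add: euclid_ip_def all_ones_def)

lemma euclid_ip_u_uv_all_ones:
  fixes u u' :: "bit ^ 'n"
  assumes "even_like_vec u" "even_like_vec u'"
  shows "euclid_ip (concat_vec u (u + s *s all_ones)) (concat_vec u' (u' + t *s all_ones))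
    = s * t * of_nat CARD('n)"
proof -
  have "euclid_ip all_ones u' = 0"
    using euclid_ip_all_ones[OF assms(2)] euclid_ip_commute by metis
  then have "euclid_ip u (t *s all_ones) = 0" "euclid_ip (s *s all_ones) u' = 0"
    using euclid_ip_all_ones[OF assms(1)] by (simp_all add: euclid_ip_scale_left euclid_ip_scale_right)
  then have "euclid_ip (u + s *s all_ones) (u' + t *s all_ones)
      = euclid_ip u u' + euclid_ip (s *s all_ones) (t *s (all_ones :: bit ^ 'n))"
    by (simp add: euclid_ip_add_left euclid_ip_add_right)
  then show ?thesis
    by (simp add: euclid_ip_concat_vec add.assoc[symmetric] euclid_ip_scale_left
        euclid_ip_scale_right euclid_ip_all_ones_self mult.assoc)
qed

lemma hull_E_u_uv_all_ones_even:
  assumes "even_like_code C1" "even CARD('n)"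
  shows "hull_E (u_uv C1 (vec.span {all_ones :: bit ^ 'n})) = u_uv C1 (vec.span {all_ones})"
  using assms
  unfolding hull_E_def euclid_dual_def u_uv_span_singleton even_like_code_def
  by (auto simp: euclid_ip_u_uv_all_ones of_nat_bit)

lemma hull_E_u_uv_all_ones_odd:
  assumes "even_like_code C1" "0 \<in> C1" "odd CARD('n)"
  shows "hull_E (u_uv C1 (vec.span {all_ones :: bit ^ 'n})) = u_uv C1 {0}"
proof -
  let ?C = "u_uv C1 (vec.span {all_ones :: bit ^ 'n})"
  have ip: "euclid_ip (concat_vec u (u + s *s all_ones)) (concat_vec u' (u' + t *s all_ones)) = s * t"
    if "u \<in> C1" "u' \<in> C1" for u u' s t
    using assms that by (simp add: even_like_code_def euclid_ip_u_uv_all_ones of_nat_bit)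
  show ?thesis
  proof (intro set_eqI iffI)
    fix x assume "x \<in> hull_E ?C"
    then obtain u s where x: "x = concat_vec u (u + s *s all_ones)" "u \<in> C1"
      and orth: "\<forall>y\<in>?C. euclid_ip y x = 0"
      unfolding hull_E_def euclid_dual_def u_uv_span_singleton by blast
    have "concat_vec 0 (0 + 1 *s all_ones) \<in> ?C"
      using \<open>0 \<in> C1\<close> unfolding u_uv_span_singleton by blast
    then have "euclid_ip (concat_vec 0 (0 + 1 *s all_ones)) x = 0"
      using orth by blast
    then have "s = 0"
      using ip[OF \<open>0 \<in> C1\<close> x(2), of 1 s] x(1) by simp
    then show "x \<in> u_uv C1 {0}"
      using u_uvI[OF x(2), of 0 "{0}"] x(1) by simp
  next
    fix x assume "x \<in> u_uv C1 {0}"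
    then obtain u where x: "x = concat_vec u (u + 0 *s all_ones)" "u \<in> C1"
      unfolding u_uv_def by auto
    then have "x \<in> ?C"
      unfolding u_uv_span_singleton by blast
    moreover have "euclid_ip y x = 0" if "y \<in> ?C" for y
    proof -
      obtain u' t where "y = concat_vec u' (u' + t *s all_ones)" "u' \<in> C1"
        using \<open>y \<in> ?C\<close> unfolding u_uv_span_singleton by blast
      then show ?thesis
        using ip[of u' u t 0] x by simp
    qed
    ultimately show "x \<in> hull_E ?C"
      by (simp add: hull_E_def euclid_dual_def)
  qed
qed

theorem theorem3:
  fixes C1 :: "(bit ^ 'n) set" and k1 d1 :: nat
  assumes "bin_linear_code C1"
    and "vec.dim C1 = k1"
    and "C1 \<noteq> {0}"
    and "min_dist C1 = d1"
    and "even_like_code C1"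
  shows "bin_linear_code (u_uv C1 (vec.span {all_ones}))
     \<and> CARD('n + 'n) = 2 * CARD('n)
     \<and> vec.dim (u_uv C1 (vec.span {all_ones})) = k1 + 1
     \<and> min_dist (u_uv C1 (vec.span {all_ones})) = min (2 * d1) CARD('n)
     \<and> (odd CARD('n) \<longrightarrow> vec.dim (hull_E (u_uv C1 (vec.span {all_ones}))) = k1)
     \<and> (even CARD('n) \<longrightarrow> vec.dim (hull_E (u_uv C1 (vec.span {all_ones}))) = k1 + 1)"
proof -
  let ?R = "vec.span {all_ones :: bit ^ 'n}"
  have C1: "vec.subspace C1"
    using assms(1) by (simp add: bin_linear_code_def)
  then have "0 \<in> C1"
    by (rule vec.subspace_0)
  have R: "vec.subspace ?R" "?R \<noteq> {0}"
    by (rule vec.subspace_span) (simp add: span_all_ones)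
  have "min_dist ?R = CARD('n)"
    by (rule min_dist_span_all_ones)
  have dim_C: "vec.dim (u_uv C1 ?R) = k1 + 1"
    using dim_u_uv[OF C1 R(1)] dim_span_all_ones assms(2) by simp
  have dim_odd_hull: "vec.dim (u_uv C1 {0}) = k1"
    using dim_u_uv[OF C1 vec.subspace_single_0] assms(2) by simp
  show ?thesis
    using subspace_u_uv[OF C1 R(1)] dim_C dim_odd_hull
      min_dist_u_uv[OF C1 R(1) assms(3) R(2)] assms(4) \<open>min_dist ?R = CARD('n)\<close>
      hull_E_u_uv_all_ones_even[OF assms(5)] hull_E_u_uv_all_ones_odd[OF assms(5) \<open>0 \<in> C1\<close>]
    by (simp add: bin_linear_code_def)
qed

end
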